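(* For every integer $m\ge0$, the following identity of rational functions in indeterminates $x,y$ holds: $$\frac{1-x^{m+1}y^{m+1}}{(1-xy)(1-x)^m(1-y)^m}=\sum_{r=0}^{m}\sum_{s=0}^{m-r}\binom{m-r}{s}\binom{m-s}{r}\frac{x^ry^s}{(1-x)^{r+s}(1-y)^{r+s}}.$$ *)

theory Defs
  imports Main
begin

end

theory Submission
  imports Defs
begin

(* With u = (1 - x)(1 - y), a = x/u and b = y/u we have x = ua, y = ub and u(1 + a + b) = 1 + xy,
   and the right-hand side is R m = dbinom_poly m a b, the polynomial in a, b with coefficients
   (m-r choose s)(m-s choose r).  Pascal's rule in both binomial factors gives the three-term
   recurrence R (m+2) + ab R m = (1 + a + b) R (m+1).  Hence g m = (1 - xy) u^m R m satisfies
   g (m+2) = (1 + xy) g (m+1) - xy g m, as does 1 - (xy)^(m+1), and the two sequences agree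
   for m = 0, 1. *)

lemma eq_by_second_order_recurrence:
  assumes "f 0 = g 0" and "f 1 = g 1"
    and "\<And>n. f (Suc (Suc n)) = h n (f (Suc n)) (f n)"
    and "\<And>n. g (Suc (Suc n)) = h n (g (Suc n)) (g n)"
  shows "f n = g n"
proof -
  have "f n = g n \<and> f (Suc n) = g (Suc n)"
    by (induction n) (use assms in auto)
  then show ?thesis ..
qed

fun shift_fst :: "(nat \<Rightarrow> nat \<Rightarrow> 'a::zero) \<Rightarrow> nat \<Rightarrow> nat \<Rightarrow> 'a" where
  "shift_fst f 0 s = 0"
| "shift_fst f (Suc r) s = f r s"

fun shift_snd :: "(nat \<Rightarrow> nat \<Rightarrow> 'a::zero) \<Rightarrow> nat \<Rightarrow> nat \<Rightarrow> 'a" where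
  "shift_snd f r 0 = 0"
| "shift_snd f r (Suc s) = f r s"

definition poly2 :: "(nat \<Rightarrow> nat \<Rightarrow> 'a::comm_semiring_1) \<Rightarrow> nat \<Rightarrow> nat \<Rightarrow> 'a \<Rightarrow> 'a \<Rightarrow> 'a" where
  "poly2 f N M a b = (\<Sum>r<N. \<Sum>s<M. f r s * a ^ r * b ^ s)"

lemma poly2_add: "poly2 (\<lambda>r s. f r s + g r s) N M a b = poly2 f N M a b + poly2 g N M a b"
  unfolding poly2_def by (simp add: sum.distrib distrib_right)

lemma poly2_mult_fst: "a * poly2 f N M a b = poly2 (shift_fst f) (Suc N) M a b"
  unfolding poly2_def by (simp only: sum.lessThan_Suc_shift) (simp add: sum_distrib_left mult_ac)

lemma poly2_mult_snd: "b * poly2 f N M a b = poly2 (shift_snd f) N (Suc M) a b"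
  unfolding poly2_def by (simp only: sum.lessThan_Suc_shift) (simp add: sum_distrib_left mult_ac)

lemma poly2_extend:
  assumes "N \<le> N'" and "M \<le> M'" and "\<And>r s. N \<le> r \<or> M \<le> s \<Longrightarrow> f r s = 0"
  shows "poly2 f N' M' a b = poly2 f N M a b"
proof -
  have "poly2 f N' M' a b = (\<Sum>r<N'. \<Sum>s<M. f r s * a ^ r * b ^ s)"
    unfolding poly2_def using assms by (intro sum.cong refl sum.mono_neutral_right) auto
  also have "\<dots> = poly2 f N M a b"
    unfolding poly2_def using assms by (intro sum.mono_neutral_right) auto
  finally show ?thesis .
qed

definition dbinom :: "nat \<Rightarrow> nat \<Rightarrow> nat \<Rightarrow> nat" where
  "dbinom m r s = ((m - r) choose s) * ((m - s) choose r)"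

lemma dbinom_eq_0: "m < r \<or> m < s \<Longrightarrow> dbinom m r s = 0"
  unfolding dbinom_def by (auto simp: binomial_eq_0 less_imp_diff_less)

lemma dbinom_rec:
  "dbinom (m + 2) r s + shift_fst (shift_snd (dbinom m)) r s
     = dbinom (m + 1) r s + shift_fst (dbinom (m + 1)) r s + shift_snd (dbinom (m + 1)) r s"
proof (cases r; cases s)
  fix r' s' assume r: "r = Suc r'" and s: "s = Suc s'"
  show ?thesis
  proof (cases "r' \<le> m \<and> s' \<le> m")
    case True
    then have "Suc m - r' = Suc (m - r')" and "Suc m - s' = Suc (m - s')"
      by (simp_all add: Suc_diff_le)
    then show ?thesis
      using r s by (simp add: dbinom_def algebra_simps)
  qed (use r s in \<open>auto simp: dbinom_def\<close>)
qed (simp_all add: dbinom_def)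

definition dbinom_poly :: "nat \<Rightarrow> 'a::comm_semiring_1 \<Rightarrow> 'a \<Rightarrow> 'a" where
  "dbinom_poly m a b = poly2 (\<lambda>r s. of_nat (dbinom m r s)) (Suc m) (Suc m) a b"

lemma dbinom_poly_eq_poly2:
  assumes "m < N" and "m < M"
  shows "dbinom_poly m a b = poly2 (\<lambda>r s. of_nat (dbinom m r s)) N M a b"
  unfolding dbinom_poly_def using assms
  by (intro poly2_extend[symmetric]) (auto simp: dbinom_eq_0)

lemma dbinom_poly_0: "dbinom_poly 0 a b = 1"
  by (simp add: dbinom_poly_def poly2_def dbinom_def)

lemma dbinom_poly_1: "dbinom_poly 1 a b = 1 + a + b"
  by (simp add: dbinom_poly_def poly2_def dbinom_def lessThan_Suc ac_simps)

lemma dbinom_poly_rec: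
  "dbinom_poly (m + 2) a b + a * b * dbinom_poly m a b = (1 + a + b) * dbinom_poly (m + 1) a b"
proof -
  define c where "c k = (\<lambda>r s. of_nat (dbinom k r s) :: 'a)" for k
  let ?P = "\<lambda>f. poly2 f (m + 3) (m + 3) a b"
  have "a * b * dbinom_poly m a b = ?P (shift_fst (shift_snd (c m)))"
    using dbinom_poly_eq_poly2[of m "m + 2" "m + 2" a b]
    by (simp add: c_def mult.assoc poly2_mult_fst poly2_mult_snd numeral_3_eq_3)
  moreover have "a * dbinom_poly (m + 1) a b = ?P (shift_fst (c (m + 1)))"
    using dbinom_poly_eq_poly2[of "m + 1" "m + 2" "m + 3" a b]
    by (simp add: c_def poly2_mult_fst numeral_3_eq_3)
  moreover have "b * dbinom_poly (m + 1) a b = ?P (shift_snd (c (m + 1)))"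
    using dbinom_poly_eq_poly2[of "m + 1" "m + 3" "m + 2" a b]
    by (simp add: c_def poly2_mult_snd numeral_3_eq_3)
  moreover have "dbinom_poly k a b = ?P (c k)" if "k \<le> m + 2" for k
    using dbinom_poly_eq_poly2[of k "m + 3" "m + 3" a b] that by (simp add: c_def)
  moreover have "c (m + 2) r s + shift_fst (shift_snd (c m)) r s
      = c (m + 1) r s + shift_fst (c (m + 1)) r s + shift_snd (c (m + 1)) r s" for r s
    using arg_cong[OF dbinom_rec[of m r s], of "of_nat :: nat \<Rightarrow> 'a"]
    by (cases r; cases s) (simp_all add: c_def)
  ultimately show ?thesis
    by (simp add: distrib_right poly2_add[symmetric])
qed

lemma dbinom_poly_triangle:
  "dbinom_poly m a b = (\<Sum>r = 0..m. \<Sum>s = 0..m - r.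
      of_nat ((m - r) choose s) * of_nat ((m - s) choose r) * (a ^ r * b ^ s))"
  unfolding dbinom_poly_def poly2_def
proof (rule sum.cong)
  fix r
  show "(\<Sum>s<Suc m. of_nat (dbinom m r s) * a ^ r * b ^ s) = (\<Sum>s = 0..m - r.
      of_nat ((m - r) choose s) * of_nat ((m - s) choose r) * (a ^ r * b ^ s))"
    by (rule sum.mono_neutral_cong_right) (auto simp: dbinom_def binomial_eq_0 mult.assoc)
qed auto

lemma dbinom_poly_closed_form:
  fixes x y :: "'a::field"
  defines "u \<equiv> (1 - x) * (1 - y)"
  assumes "u \<noteq> 0"
  shows "(1 - x * y) * u ^ m * dbinom_poly m (x / u) (y / u) = 1 - (x * y) ^ (m + 1)"
proof -
  define a b where "a = x / u" and "b = y / u"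
  have ua: "u * a = x" and ub: "u * b = y"
    using assms by (simp_all add: a_def b_def)
  have "u * (1 + a + b) = u + x + y"
    using ua ub by (simp add: distrib_left)
  also have "\<dots> = 1 + x * y"
    by (simp add: u_def algebra_simps)
  finally have u_sum: "u * (1 + a + b) = 1 + x * y" .
  define f where "f n = (1 - x * y) * u ^ n * dbinom_poly n a b" for n
  have f_rec: "f (Suc (Suc n)) = (1 + x * y) * f (Suc n) - x * y * f n" for n
  proof -
    have "f (Suc (Suc n)) + (u * a) * (u * b) * f n
        = (1 - x * y) * u ^ (n + 2) * (dbinom_poly (n + 2) a b + a * b * dbinom_poly n a b)"
      by (simp add: f_def algebra_simps)
    also have "\<dots> = u * (1 + a + b) * f (Suc n)"
      by (simp only: dbinom_poly_rec) (simp add: f_def algebra_simps)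
    finally show ?thesis
      by (simp add: u_sum ua ub eq_diff_eq)
  qed
  have "f m = 1 - (x * y) ^ (m + 1)"
  proof (rule eq_by_second_order_recurrence[where f = f and g = "\<lambda>n. 1 - (x * y) ^ (n + 1)"
        and h = "\<lambda>_ p q. (1 + x * y) * p - x * y * q"])
    show "f 0 = 1 - (x * y) ^ (0 + 1)"
      by (simp add: f_def dbinom_poly_0)
    have "f 1 = (1 - x * y) * (u * (1 + a + b))"
      unfolding f_def dbinom_poly_1 by (simp add: mult.assoc)
    also have "\<dots> = 1 - (x * y) ^ (1 + 1)"
      unfolding u_sum by (simp add: algebra_simps power2_eq_square)
    finally show "f 1 = 1 - (x * y) ^ (1 + 1)" .
  qed (simp_all add: f_rec algebra_simps)
  then show ?thesis
    by (simp add: f_def a_def b_def)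
qed

theorem theorem2p4:
  fixes x y :: "'a :: field" and m :: nat
  assumes "x \<noteq> 1" and "y \<noteq> 1" and "x * y \<noteq> 1"
  shows "(1 - x ^ (m + 1) * y ^ (m + 1)) / ((1 - x * y) * (1 - x) ^ m * (1 - y) ^ m)
    = (\<Sum>r = 0..m. \<Sum>s = 0..m - r.
         of_nat ((m - r) choose s) * of_nat ((m - s) choose r) *
         (x ^ r * y ^ s / ((1 - x) ^ (r + s) * (1 - y) ^ (r + s))))"
proof -
  define u where "u = (1 - x) * (1 - y)"
  have "u \<noteq> 0" and "1 - x * y \<noteq> 0"
    using assms by (simp_all add: u_def)
  have "x ^ r * y ^ s / ((1 - x) ^ (r + s) * (1 - y) ^ (r + s)) = (x / u) ^ r * (y / u) ^ s" for r s
    by (simp add: u_def power_divide power_add power_mult_distrib)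
  then have "(\<Sum>r = 0..m. \<Sum>s = 0..m - r.
         of_nat ((m - r) choose s) * of_nat ((m - s) choose r) *
         (x ^ r * y ^ s / ((1 - x) ^ (r + s) * (1 - y) ^ (r + s)))) = dbinom_poly m (x / u) (y / u)"
    by (simp add: dbinom_poly_triangle)
  moreover have "1 - x ^ (m + 1) * y ^ (m + 1) = (1 - x * y) * u ^ m * dbinom_poly m (x / u) (y / u)"
    using dbinom_poly_closed_form[of x y m] \<open>u \<noteq> 0\<close> by (simp add: u_def power_mult_distrib)
  moreover have "(1 - x * y) * (1 - x) ^ m * (1 - y) ^ m = (1 - x * y) * u ^ m"
    by (simp add: u_def power_mult_distrib)
  ultimately show ?thesis
    using \<open>u \<noteq> 0\<close> \<open>1 - x * y \<noteq> 0\<close> by simp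
qed

end
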